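(* In the FIND setting of the context, fix a leaf cluster $\mathcal C_r$, a consistent ordering of $\mathcal T_r^+$, and perform the elimination $\mathbf A_{g+}=\mathbf L_g^{-1}\mathbf A_g$ while updating $\boldsymbol\Sigma_{g+}=\mathbf L_g^{-1}\boldsymbol\Sigma_g\mathbf L_g^{-\dagger}$ (starting from $\boldsymbol\Sigma_{g_1}=\boldsymbol\Sigma$). Then for every node $g$ of $\mathcal T_r^+$: (I) for every node $h$ of $\mathcal T_r^+$ with $\mathcal S_h\ge\mathcal S_g$ (i.e. $h=g$ or $h$ after $g$), $\boldsymbol\Sigma_g(\mathcal S_h,\mathcal S_{>h}\setminus\mathcal B_h)=0$ and $\boldsymbol\Sigma_g(\mathcal S_{>h}\setminus\mathcal B_h,\mathcal S_h)=0$; (II) (a) $\boldsymbol\Sigma_{g+}(\mathcal S_{\le g},\mathcal S_{\le g})=\boldsymbol\Sigma_g(\mathcal S_{\le g},\mathcal S_{\le g})$; (b) $\boldsymbol\Sigma_{g+}(\mathcal M,\mathcal S_{>g}\setminus\mathcal B_g)=\boldsymbol\Sigma_g(\mathcal M,\mathcal S_{>g}\setminus\mathcal B_g)$; (c) $\boldsymbol\Sigma_{g+}(\mathcal S_{>g}\setminus\mathcal B_g,\mathcal M)=\boldsymbol\Sigma_g(\mathcal S_{>g}\setminus\mathcal B_g,\mathcal M)$; (III) $\boldsymbol\Sigma_{g+}(\mathcal B_g,\mathcal B_g)=\boldsymbol\Sigma_g(\mathcal B_g,\mathcal B_g)-\mathcal L_g\boldsymbol\Sigma_g(\mathcal S_g,\mathcal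 B_g)-\boldsymbol\Sigma_g(\mathcal B_g,\mathcal S_g)\mathcal L_g^\dagger+\mathcal L_g\boldsymbol\Sigma_g(\mathcal S_g,\mathcal S_g)\mathcal L_g^\dagger$.
   Context: Setting (FIND). $\mathcal M$ is a finite set of mesh nodes; $\mathbf A$ is an invertible complex matrix indexed by $\mathcal M\times\mathcal M$, structurally symmetric ($A_{ij}\neq0\iff A_{ji}\neq0$); distinct nodes $i,j$ are connected if $A_{ij}\neq 0$. $\boldsymbol\Sigma$ is a complex matrix indexed by $\mathcal M\times\mathcal M$ with $\Sigma_{ij}=0$ whenever $i\neq j$ and $i,j$ are not connected. $\dagger$ denotes conjugate transpose and $\mathbf X^{-\dagger}=(\mathbf X^{-1})^\dagger$. For $X,Y\subseteq\mathcal M$, $\mathbf X(X,Y)$ is the submatrix with rows in $X$ and columns in $Y$. For a cluster $\mathcal C\subseteq\mathcal M$: boundary set $\mathcal B_{\mathcal C}=\{i\in\mathcal C: A_{ij}\neq 0\text{ for some } j\notin\mathcal C\}$, inner set $\mathcal I_{\mathcal C}=\mathcal C\setminus\mathcal B_{\mathcal C}$; for $\mathcal C_g$ write $\mathcal B_g,\mathcal I_g$. Cluster tree: $\mathcal T$ is a rooted binary tree of clusters with root $\mathcal M$, each non-leaf cluster the disjoint union of its two children. For a leaf $\mathcal C_r$ with path $r=a_0,\dots,a_d$ (root) and $b_k$ the sibling of $a_k$, the augmented tree $\mathcal T_r^+$ has root $\mathcal C_{-r}=\mathcal M\setminus\mathcal C_r$; for $0\le k\le d-2$, $\mathcal C_{-a_k}=\mathcal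 M\setminus\mathcal C_{a_k}$ has children $\mathcal C_{b_k}$ and $\mathcal C_{-a_{k+1}}$, with $\mathcal C_{-a_{d-1}}$ identified with $\mathcal C_{b_{d-1}}$ (equal sets); each basic cluster $\mathcal C_{b_k}$ carries its subtree from $\mathcal T$. Private inner nodes: $\mathcal S_g=\mathcal I_g$ for a leaf $g$ of $\mathcal T_r^+$; $\mathcal S_g=\mathcal I_g\setminus(\mathcal I_i\cup\mathcal I_j)$ if $g$ has children $i,j$. The sets $\mathcal S_g$ ($g\in\mathcal T_r^+$), $\mathcal B_{-r}$, $\mathcal C_r$ partition $\mathcal M$. Consistent ordering: a total order $g_1,\dots,g_m$ of the nodes of $\mathcal T_r^+$ with every node after all its descendants; $\mathcal S_h<\mathcal S_g$ means $h$ precedes $g$. $\mathcal S_{<g}$, $\mathcal S_{\le g}$: union of $\mathcal S_h$ over $h$ preceding $g$ (resp. preceding or equal); $\mathcal S_{>g}$: union of $\mathcal S_h$ over $h$ after $g$, together with $\mathcal B_{-r}\cup\mathcal C_r$. Elimination: $\mathbf A_{g_1}=\mathbf A$, $\boldsymbol\Sigma_{g_1}=\boldsymbol\Sigma$. For each $g$ (with $\mathbf A_g(\mathcal S_g,\mathcal S_g)$ assumed invertible), $\mathcal L_g=\mathbf A_g(\mathcal B_g,\mathcal S_g)\mathbf A_g(\mathcal S_g,\mathcal S_g)^{-1}$, $\mathbf L_g$ is the identity on $\mathcal M$ except $\mathbf L_g(\mathcal B_g,\mathcal S_g)=\mathcal L_g$ (this is the block Gaussian elimination factor of the columns $\mathcal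 S_g$), $\mathbf A_{g+}=\mathbf L_g^{-1}\mathbf A_g$, $\boldsymbol\Sigma_{g+}=\mathbf L_g^{-1}\boldsymbol\Sigma_g\mathbf L_g^{-\dagger}$, and $\mathbf A_{g_{t+1}}=\mathbf A_{g_t+}$, $\boldsymbol\Sigma_{g_{t+1}}=\boldsymbol\Sigma_{g_t+}$. *)

theory Defs
  imports Complex_Main "HOL-Library.Sublist"
begin

text \<open>A matrix indexed by a finite index set K is a function 'a => 'a => complex;
only its entries on K x K are relevant. Products are taken over K.\<close>

type_synonym 'a cmat = "'a \<Rightarrow> 'a \<Rightarrow> complex"

definition mmul :: "'a set \<Rightarrow> 'a cmat \<Rightarrow> 'a cmat \<Rightarrow> 'a cmat" where
  "mmul K X Y = (\<lambda>i j. \<Sum>k\<in>K. X i k * Y k j)"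

definition idm :: "'a set \<Rightarrow> 'a cmat" where
  "idm K = (\<lambda>i j. if i = j \<and> i \<in> K then 1 else 0)"

definition is_inv_on :: "'a set \<Rightarrow> 'a cmat \<Rightarrow> 'a cmat \<Rightarrow> bool" where
  "is_inv_on K X Y \<longleftrightarrow>
     (\<forall>i\<in>K. \<forall>j\<in>K. (\<Sum>k\<in>K. X i k * Y k j) = idm K i j \<and> (\<Sum>k\<in>K. Y i k * X k j) = idm K i j)
     \<and> (\<forall>i j. i \<notin> K \<or> j \<notin> K \<longrightarrow> Y i j = 0)"

definition invertible_on :: "'a set \<Rightarrow> 'a cmat \<Rightarrow> bool" where
  "invertible_on K X \<longleftrightarrow> (\<exists>Y. is_inv_on K X Y)"

definition minv :: "'a set \<Rightarrow> 'a cmat \<Rightarrow> 'a cmat" where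
  "minv K X = (THE Y. is_inv_on K X Y)"

definition dag :: "'a cmat \<Rightarrow> 'a cmat" where
  "dag X = (\<lambda>i j. cnj (X j i))"

definition bnd :: "'a set \<Rightarrow> 'a cmat \<Rightarrow> 'a set \<Rightarrow> 'a set" where
  "bnd M A X = {i \<in> X. \<exists>j\<in>M. j \<notin> X \<and> A i j \<noteq> 0}"

definition inner :: "'a set \<Rightarrow> 'a cmat \<Rightarrow> 'a set \<Rightarrow> 'a set" where
  "inner M A X = X - bnd M A X"

text \<open>The cluster tree T is given by its set P of node positions (paths from the root,
False = left child, True = right child) and the cluster map Cl.\<close>

definition cluster_tree :: "'a set \<Rightarrow> bool list set \<Rightarrow> (bool list \<Rightarrow> 'a set) \<Rightarrow> bool" where
  "cluster_tree M P Cl \<longleftrightarrow>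
     finite P \<and> [] \<in> P \<and> Cl [] = M
     \<and> (\<forall>p b. p @ [b] \<in> P \<longrightarrow> p \<in> P)
     \<and> (\<forall>p. p @ [False] \<in> P \<longleftrightarrow> p @ [True] \<in> P)
     \<and> (\<forall>p. p @ [False] \<in> P \<longrightarrow>
            Cl p = Cl (p @ [False]) \<union> Cl (p @ [True]) \<and> Cl (p @ [False]) \<inter> Cl (p @ [True]) = {})"

definition is_leaf :: "bool list set \<Rightarrow> bool list \<Rightarrow> bool" where
  "is_leaf P r \<longleftrightarrow> r \<in> P \<and> r @ [False] \<notin> P"

text \<open>Path r = a_0, ..., a_d = root with d = length r; a_k = take (d - k) r;
b_k = sibling of a_k (k < d).\<close>
definition anc :: "bool list \<Rightarrow> nat \<Rightarrow> bool list" where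
  "anc r k = take (length r - k) r"

definition sib :: "bool list \<Rightarrow> nat \<Rightarrow> bool list" where
  "sib r k = take (length r - Suc k) r @ [\<not> r ! (length r - Suc k)]"

text \<open>Nodes of the augmented tree: Cmp a stands for the complement cluster -a
(for a = a_k, 0 <= k <= d-2), Bas q for a node q of T lying in the subtree of
some basic cluster b_k. The node -a_(d-1) is identified with Bas b_(d-1).\<close>
datatype anode = Bas "bool list" | Cmp "bool list"

definition aug_nodes :: "bool list set \<Rightarrow> bool list \<Rightarrow> anode set" where
  "aug_nodes P r =
     {Cmp (anc r k) | k. k + 2 \<le> length r}
     \<union> {Bas q | q k. k < length r \<and> q \<in> P \<and> prefix (sib r k) q}"

definition aug_children :: "bool list set \<Rightarrow> bool list \<Rightarrow> anode \<Rightarrow> (anode \<times> anode) option" where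
  "aug_children P r g = (case g of
      Cmp a \<Rightarrow> (let k = length r - length a in
                  Some (Bas (sib r k),
                        if k + 3 \<le> length r then Cmp (anc r (Suc k)) else Bas (sib r (Suc k))))
    | Bas q \<Rightarrow> (if q @ [False] \<in> P then Some (Bas (q @ [False]), Bas (q @ [True])) else None))"

definition aug_cluster :: "'a set \<Rightarrow> (bool list \<Rightarrow> 'a set) \<Rightarrow> anode \<Rightarrow> 'a set" where
  "aug_cluster M Cl g = (case g of Cmp a \<Rightarrow> M - Cl a | Bas q \<Rightarrow> Cl q)"

definition aug_child_rel :: "bool list set \<Rightarrow> bool list \<Rightarrow> (anode \<times> anode) set" where
  "aug_child_rel P r = {(c, p). p \<in> aug_nodes P r \<and>
       (\<exists>c1 c2. aug_children P r p = Some (c1, c2) \<and> (c = c1 \<or> c = c2))}"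

definition consistent_ordering :: "bool list set \<Rightarrow> bool list \<Rightarrow> anode list \<Rightarrow> bool" where
  "consistent_ordering P r ord \<longleftrightarrow>
     distinct ord \<and> set ord = aug_nodes P r
     \<and> (\<forall>s < length ord. \<forall>t < length ord. (ord ! s, ord ! t) \<in> (aug_child_rel P r)\<^sup>+ \<longrightarrow> s < t)"

definition Bnd :: "'a set \<Rightarrow> 'a cmat \<Rightarrow> (bool list \<Rightarrow> 'a set) \<Rightarrow> anode \<Rightarrow> 'a set" where
  "Bnd M A Cl g = bnd M A (aug_cluster M Cl g)"

definition Inn :: "'a set \<Rightarrow> 'a cmat \<Rightarrow> (bool list \<Rightarrow> 'a set) \<Rightarrow> anode \<Rightarrow> 'a set" where
  "Inn M A Cl g = inner M A (aug_cluster M Cl g)"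

definition priv :: "'a set \<Rightarrow> 'a cmat \<Rightarrow> bool list set \<Rightarrow> (bool list \<Rightarrow> 'a set) \<Rightarrow> bool list \<Rightarrow> anode \<Rightarrow> 'a set" where
  "priv M A P Cl r g = (case aug_children P r g of
      None \<Rightarrow> Inn M A Cl g
    | Some (c1, c2) \<Rightarrow> Inn M A Cl g - (Inn M A Cl c1 \<union> Inn M A Cl c2))"

text \<open>S_{<=g} and S_{>g} for g = ord ! t (S_{>g} includes B_{-r} and C_r).\<close>
definition S_le :: "'a set \<Rightarrow> 'a cmat \<Rightarrow> bool list set \<Rightarrow> (bool list \<Rightarrow> 'a set) \<Rightarrow> bool list \<Rightarrow> anode list \<Rightarrow> nat \<Rightarrow> 'a set" where
  "S_le M A P Cl r ord t = (\<Union>s\<in>{s. s \<le> t \<and> s < length ord}. priv M A P Cl r (ord ! s))"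

definition S_gt :: "'a set \<Rightarrow> 'a cmat \<Rightarrow> bool list set \<Rightarrow> (bool list \<Rightarrow> 'a set) \<Rightarrow> bool list \<Rightarrow> anode list \<Rightarrow> nat \<Rightarrow> 'a set" where
  "S_gt M A P Cl r ord t = (\<Union>s\<in>{s. t < s \<and> s < length ord}. priv M A P Cl r (ord ! s))
       \<union> bnd M A (M - Cl r) \<union> Cl r"

definition Lfac :: "'a cmat \<Rightarrow> 'a set \<Rightarrow> 'a set \<Rightarrow> 'a cmat" where
  "Lfac X B S = (\<lambda>i j. if i \<in> B \<and> j \<in> S then (\<Sum>k\<in>S. X i k * minv S X k j) else 0)"

definition Lmat :: "'a set \<Rightarrow> 'a cmat \<Rightarrow> 'a set \<Rightarrow> 'a set \<Rightarrow> 'a cmat" where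
  "Lmat M X B S = (\<lambda>i j. if i \<in> B \<and> j \<in> S then Lfac X B S i j else idm M i j)"

definition elim_step :: "'a set \<Rightarrow> 'a set \<Rightarrow> 'a set \<Rightarrow> 'a cmat \<times> 'a cmat \<Rightarrow> 'a cmat \<times> 'a cmat" where
  "elim_step M B S st = (let X = fst st; Sig = snd st; Li = minv M (Lmat M X B S) in
      (mmul M Li X, mmul M (mmul M Li Sig) (dag Li)))"

text \<open>elim_state ... t = (A_{g_(t+1)}, Sigma_{g_(t+1)}) in 0-based list indexing,
i.e. the pair before eliminating ord ! t; elim_state ... 0 = (A, Sigma).\<close>
definition elim_state :: "'a set \<Rightarrow> 'a cmat \<Rightarrow> 'a cmat \<Rightarrow> bool list set \<Rightarrow> (bool list \<Rightarrow> 'a set) \<Rightarrow> bool list \<Rightarrow> anode list \<Rightarrow> nat \<Rightarrow> 'a cmat \<times> 'a cmat" where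
  "elim_state M A Sig P Cl r ord t =
     foldl (\<lambda>st g. elim_step M (Bnd M A Cl g) (priv M A P Cl r g) st) (A, Sig) (take t ord)"

end

theory Submission
  imports Defs
begin

text \<open>
  The inverse of the elimination matrix is \<open>I - E\<close> with \<open>E\<close> supported on \<open>B\<^sub>g \<times> S\<^sub>g\<close>,
  so \<open>\<Sigma>\<^sub>g\<^sub>+ = (I - E) \<Sigma>\<^sub>g (I - E)\<^sup>\<dagger>\<close> differs from \<open>\<Sigma>\<^sub>g\<close> only by terms with a row and a column
  index in \<open>B\<^sub>g\<close> whose inner factors are entries of \<open>\<Sigma>\<^sub>g\<close> with an index in \<open>S\<^sub>g\<close>. Expanding
  this gives (III); (II) follows once the entries \<open>\<Sigma>\<^sub>g(S\<^sub>g, S\<^sub>>\<^sub>g \ B\<^sub>g)\<close> vanish, which is the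
  invariant (I). Initially (I) holds because \<open>S\<^sub>h\<close> consists of inner nodes of \<open>C\<^sub>h\<close>, every
  later private set or node of \<open>B\<^sub>-\<^sub>r \<union> C\<^sub>r\<close> meets \<open>C\<^sub>h\<close> only in \<open>B\<^sub>h\<close>, and \<open>\<Sigma>\<close> has the sparsity
  of \<open>A\<close>. It is preserved since the clusters of the augmented tree are laminar: an earlier
  node whose boundary meets \<open>S\<^sub>h\<close> has its cluster inside \<open>C\<^sub>h\<close>, so the update never couples
  \<open>S\<^sub>h\<close> with \<open>S\<^sub>>\<^sub>h \ B\<^sub>h\<close>.
\<close>

section \<open>Cluster trees\<close>

locale binary_cluster_tree =
  fixes M :: "'a set" and P :: "bool list set" and Cl :: "bool list \<Rightarrow> 'a set"
  assumes tree: "cluster_tree M P Cl"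
begin

lemma root_cluster: "Cl [] = M"
  and parent_in: "p @ [b] \<in> P \<Longrightarrow> p \<in> P"
  and children_in_iff: "p @ [False] \<in> P \<longleftrightarrow> p @ [True] \<in> P"
  and children_partition: "p @ [False] \<in> P \<Longrightarrow>
     Cl p = Cl (p @ [False]) \<union> Cl (p @ [True]) \<and> Cl (p @ [False]) \<inter> Cl (p @ [True]) = {}"
  using tree unfolding cluster_tree_def by blast+

lemma sibling_in: "p @ [b] \<in> P \<Longrightarrow> p @ [c] \<in> P"
  using children_in_iff by (cases b; cases c) auto

lemma child_subset: "p @ [b] \<in> P \<Longrightarrow> Cl (p @ [b]) \<subseteq> Cl p"
  using children_partition[OF sibling_in] by (cases b) auto

lemma siblings_disjoint: "p @ [b] \<in> P \<Longrightarrow> Cl (p @ [b]) \<inter> Cl (p @ [\<not> b]) = {}"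
  using children_partition[OF sibling_in] by (cases b) auto

lemma prefix_cluster_mono: "prefix p q \<Longrightarrow> q \<in> P \<Longrightarrow> p \<in> P \<and> Cl q \<subseteq> Cl p"
proof (induction q rule: rev_induct)
  case (snoc b q)
  then show ?case
  proof (cases "p = q @ [b]")
    case False
    then have "prefix p q" using snoc.prems by (simp add: prefix_snoc)
    then show ?thesis using snoc parent_in child_subset by blast
  qed simp
qed simp

lemma cluster_subset: "p \<in> P \<Longrightarrow> Cl p \<subseteq> M"
  using prefix_cluster_mono[of "[]" p] root_cluster by simp

lemma incomparable_clusters_disjoint:
  assumes "p \<in> P" "q \<in> P" "\<not> prefix p q" "\<not> prefix q p"
  shows "Cl p \<inter> Cl q = {}"
proof -
  have "p \<parallel> q" using assms by auto
  from parallel_decomp[OF this] obtain as b bs c cs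
    where bc: "b \<noteq> c" and p: "p = (as @ [b]) @ bs" and q: "q = (as @ [c]) @ cs" by auto
  have "Cl p \<subseteq> Cl (as @ [b])" "as @ [b] \<in> P"
    using prefix_cluster_mono[of "as @ [b]" p] assms(1) p by auto
  moreover have "Cl q \<subseteq> Cl (as @ [\<not> b])"
    using prefix_cluster_mono[of "as @ [c]" q] assms(2) q bc by auto
  ultimately show ?thesis using siblings_disjoint[of as b] by blast
qed

end

locale cluster_tree_leaf = binary_cluster_tree M P Cl
  for M :: "'a set" and P Cl +
  fixes r :: "bool list"
  assumes leaf: "is_leaf P r"
begin

lemma leaf_in: "r \<in> P"
  using leaf by (simp add: is_leaf_def)

abbreviation "d \<equiv> length r"

lemma length_anc: "k \<le> d \<Longrightarrow> length (anc r k) = d - k"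
  by (simp add: anc_def)

lemma anc_eq_snoc: "k < d \<Longrightarrow> anc r k = take (d - Suc k) r @ [r ! (d - Suc k)]"
  using take_Suc_conv_app_nth[of "d - Suc k" r] by (simp add: anc_def Suc_diff_Suc)

lemma prefix_anc_leaf: "prefix (anc r k) r"
  by (simp add: anc_def take_is_prefix)

lemma anc_in: "anc r k \<in> P"
  using prefix_cluster_mono[OF prefix_anc_leaf leaf_in] by simp

lemma leaf_cluster_subset_anc: "Cl r \<subseteq> Cl (anc r k)"
  using prefix_cluster_mono[OF prefix_anc_leaf leaf_in] by simp

lemma prefix_anc_anc: "k \<le> k' \<Longrightarrow> prefix (anc r k') (anc r k)"
proof -
  assume "k \<le> k'"
  then have "take (d - k') r = take (d - k') (take (d - k) r)" by (simp add: min_def)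
  then show ?thesis unfolding anc_def by (metis take_is_prefix)
qed

lemma anc_cluster_mono: "k \<le> k' \<Longrightarrow> Cl (anc r k) \<subseteq> Cl (anc r k')"
  using prefix_cluster_mono[OF prefix_anc_anc anc_in] by blast

lemma sib_in: "k < d \<Longrightarrow> sib r k \<in> P"
  using sibling_in[of "take (d - Suc k) r" "r ! (d - Suc k)"] anc_eq_snoc[of k] anc_in[of k]
  by (simp add: sib_def)

lemma sib_anc_disjoint: "k < d \<Longrightarrow> k' \<le> k \<Longrightarrow> Cl (sib r k) \<inter> Cl (anc r k') = {}"
  using siblings_disjoint[of "take (d - Suc k) r" "r ! (d - Suc k)"] anc_eq_snoc[of k] anc_in[of k]
    anc_cluster_mono[of k' k]
  by (auto simp: sib_def)

lemma prefix_anc_sib: "k < k' \<Longrightarrow> prefix (anc r k') (sib r k)"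
proof -
  assume "k < k'"
  then have "prefix (anc r k') (anc r (Suc k))" by (simp add: prefix_anc_anc)
  moreover have "prefix (anc r (Suc k)) (sib r k)" by (simp add: sib_def anc_def)
  ultimately show ?thesis by (rule prefix_order.trans)
qed

end

section \<open>The augmented tree\<close>

context cluster_tree_leaf
begin

abbreviation "N \<equiv> aug_nodes P r"
abbreviation "R \<equiv> aug_child_rel P r"
abbreviation "C \<equiv> aug_cluster M Cl"

lemma aug_nodes_iff:
  "x \<in> N \<longleftrightarrow> (\<exists>k. x = Cmp (anc r k) \<and> k + 2 \<le> d)
              \<or> (\<exists>q k. x = Bas q \<and> k < d \<and> q \<in> P \<and> prefix (sib r k) q)"
  unfolding aug_nodes_def by blast

lemma aug_children_Cmp:
  "k + 2 \<le> d \<Longrightarrow> aug_children P r (Cmp (anc r k)) =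
     Some (Bas (sib r k), if k + 3 \<le> d then Cmp (anc r (Suc k)) else Bas (sib r (Suc k)))"
  unfolding aug_children_def by (simp add: length_anc Let_def)

lemma aug_children_Bas:
  "aug_children P r (Bas q) =
     (if q @ [False] \<in> P then Some (Bas (q @ [False]), Bas (q @ [True])) else None)"
  unfolding aug_children_def by simp

lemma aug_child_rel_iff:
  "(c, p) \<in> R \<longleftrightarrow> p \<in> N \<and> (\<exists>c1 c2. aug_children P r p = Some (c1, c2) \<and> (c = c1 \<or> c = c2))"
  unfolding aug_child_rel_def by blast

lemma aug_cluster_subset: "x \<in> N \<Longrightarrow> C x \<subseteq> M - Cl r"
proof -
  assume "x \<in> N"
  then consider k where "x = Cmp (anc r k)"
    | q k where "x = Bas q" "k < d" "q \<in> P" "prefix (sib r k) q"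
    unfolding aug_nodes_iff by blast
  then show ?thesis
  proof cases
    case 1
    then show ?thesis using leaf_cluster_subset_anc[of k] by (auto simp: aug_cluster_def)
  next
    case 2
    have "Cl q \<subseteq> Cl (sib r k)" "Cl (sib r k) \<subseteq> M"
      using prefix_cluster_mono cluster_subset sib_in 2 by blast+
    then show ?thesis
      using 2 sib_anc_disjoint[of k k] leaf_cluster_subset_anc[of k] by (auto simp: aug_cluster_def)
  qed
qed

lemma Bas_sib_in: "k < d \<Longrightarrow> Bas (sib r k) \<in> N"
  unfolding aug_nodes_iff by (intro disjI2 exI[of _ "sib r k"] exI[of _ k]) (simp add: sib_in)

lemma sib_cluster_subset_Cmp: "k < d \<Longrightarrow> k' \<le> k \<Longrightarrow> C (Bas (sib r k)) \<subseteq> C (Cmp (anc r k'))"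
  using cluster_subset[OF sib_in, of k] sib_anc_disjoint[of k k'] by (auto simp: aug_cluster_def)

lemma aug_children_in:
  assumes "x \<in> N" "aug_children P r x = Some (c1, c2)"
  shows "c1 \<in> N \<and> c2 \<in> N \<and> C c1 \<subseteq> C x \<and> C c2 \<subseteq> C x"
proof -
  from assms(1) consider k where "x = Cmp (anc r k)" "k + 2 \<le> d"
    | q k where "x = Bas q" "k < d" "q \<in> P" "prefix (sib r k) q"
    unfolding aug_nodes_iff by blast
  then show ?thesis
  proof cases
    case 1
    have c: "c1 = Bas (sib r k)"
      "c2 = (if k + 3 \<le> d then Cmp (anc r (Suc k)) else Bas (sib r (Suc k)))"
      using assms(2) aug_children_Cmp[OF 1(2)] 1(1) by auto
    have "c2 \<in> N \<and> C c2 \<subseteq> C x"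
    proof (cases "k + 3 \<le> d")
      case True
      then show ?thesis using c 1 anc_cluster_mono[of k "Suc k"] unfolding aug_nodes_iff
        by (auto simp: aug_cluster_def)
    qed (use c 1 Bas_sib_in[of "Suc k"] sib_cluster_subset_Cmp[of "Suc k" k] in auto)
    then show ?thesis using c 1 Bas_sib_in[of k] sib_cluster_subset_Cmp[of k k] by auto
  next
    case 2
    have F: "q @ [False] \<in> P" and c: "c1 = Bas (q @ [False])" "c2 = Bas (q @ [True])"
      using assms(2) 2(1) aug_children_Bas[of q] by (auto split: if_splits)
    have T: "q @ [True] \<in> P" using F children_in_iff by blast
    have "prefix (sib r k) (q @ [False])" "prefix (sib r k) (q @ [True])"
      using 2(4) by (auto intro: prefix_order.trans)
    then show ?thesis using c F T 2 child_subset[OF F] child_subset[OF T] unfolding aug_nodes_iff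
      by (auto simp: aug_cluster_def)
  qed
qed

lemma aug_descendant_cluster_subset: "(x, y) \<in> R\<^sup>+ \<Longrightarrow> C x \<subseteq> C y \<and> x \<in> N \<and> y \<in> N"
proof (induction rule: trancl_induct)
  case (base y)
  then show ?case using aug_children_in unfolding aug_child_rel_iff by blast
next
  case (step y z)
  then show ?case using aug_children_in unfolding aug_child_rel_iff by blast
qed

lemma Cmp_descendant_Cmp: "k < k' \<Longrightarrow> k' + 2 \<le> d \<Longrightarrow> (Cmp (anc r k'), Cmp (anc r k)) \<in> R\<^sup>+"
proof (induction k')
  case (Suc m)
  have "Cmp (anc r m) \<in> N" using Suc.prems unfolding aug_nodes_iff by auto
  then have edge: "(Cmp (anc r (Suc m)), Cmp (anc r m)) \<in> R"
    using aug_children_Cmp[of m] Suc.prems unfolding aug_child_rel_iff by auto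
  show ?case
  proof (cases "m = k")
    case False
    then have "(Cmp (anc r m), Cmp (anc r k)) \<in> R\<^sup>+" using Suc by auto
    then show ?thesis using edge by (meson trancl_into_trancl2)
  qed (use edge in auto)
qed simp

lemma Bas_descendant_Bas:
  "prefix p q \<Longrightarrow> p \<noteq> q \<Longrightarrow> q \<in> P \<Longrightarrow> prefix (sib r k) p \<Longrightarrow> k < d \<Longrightarrow> (Bas q, Bas p) \<in> R\<^sup>+"
proof (induction q rule: rev_induct)
  case (snoc b q)
  have pq: "prefix p q" using snoc.prems(1,2) by (simp add: prefix_snoc)
  have qP: "q \<in> P" and F: "q @ [False] \<in> P" using snoc.prems(3) parent_in sibling_in by blast+
  have "Bas q \<in> N" using qP snoc.prems(4,5) pq unfolding aug_nodes_iff by (blast intro: prefix_order.trans)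
  then have edge: "(Bas (q @ [b]), Bas q) \<in> R"
    using F aug_children_Bas[of q] unfolding aug_child_rel_iff by (cases b) auto
  show ?case
  proof (cases "p = q")
    case False
    then have "(Bas q, Bas p) \<in> R\<^sup>+" using snoc pq qP by auto
    then show ?thesis using edge by (meson trancl_into_trancl2)
  qed (use edge in auto)
qed simp

lemma sib_child_of_Cmp:
  assumes "k < d" "2 \<le> d"
  shows "(Bas (sib r k), Cmp (anc r (min k (d - 2)))) \<in> R"
proof (cases "k + 2 \<le> d")
  case True
  then have "Cmp (anc r k) \<in> N" unfolding aug_nodes_iff by auto
  then show ?thesis using True aug_children_Cmp[of k] unfolding aug_child_rel_iff by (auto simp: min_def)
next
  case False
  then have k: "k = Suc (d - 2)" "min k (d - 2) = d - 2" using assms by auto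
  have "Cmp (anc r (d - 2)) \<in> N" using assms unfolding aug_nodes_iff by auto
  then show ?thesis using aug_children_Cmp[of "d - 2"] assms k unfolding aug_child_rel_iff by auto
qed

lemma Bas_descendant_Cmp:
  assumes "k' \<le> k" "k < d" "k' + 2 \<le> d" "q \<in> P" "prefix (sib r k) q"
  shows "(Bas q, Cmp (anc r k')) \<in> R\<^sup>+"
proof -
  define j where "j = min k (d - 2)"
  have "(Bas q, Bas (sib r k)) \<in> R\<^sup>*"
    using Bas_descendant_Bas[of "sib r k" q k] assms by (cases "q = sib r k") auto
  moreover have "(Bas (sib r k), Cmp (anc r j)) \<in> R"
    using sib_child_of_Cmp assms j_def by auto
  moreover have "(Cmp (anc r j), Cmp (anc r k')) \<in> R\<^sup>*"
  proof (cases "k' = j")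
    case False
    then have "k' < j" "j + 2 \<le> d" using assms j_def by auto
    then show ?thesis using Cmp_descendant_Cmp[of k' j] by auto
  qed simp
  ultimately show ?thesis by (meson rtrancl_into_trancl1 trancl_rtrancl_trancl)
qed

lemma Bas_Cmp_disjoint:
  "k < k' \<Longrightarrow> prefix (sib r k) q \<Longrightarrow> q \<in> P \<Longrightarrow> C (Bas q) \<inter> C (Cmp (anc r k')) = {}"
  using prefix_cluster_mono[OF prefix_order.trans[OF prefix_anc_sib]] by (auto simp: aug_cluster_def)

lemma aug_tree_laminar:
  assumes "x \<in> N" "y \<in> N" "x \<noteq> y"
  shows "(x, y) \<in> R\<^sup>+ \<or> (y, x) \<in> R\<^sup>+ \<or> C x \<inter> C y = {}"
proof -
  have Cmp_Bas: "(Cmp (anc r k), Bas q) \<in> R\<^sup>+ \<or> (Bas q, Cmp (anc r k)) \<in> R\<^sup>+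
      \<or> C (Cmp (anc r k)) \<inter> C (Bas q) = {}"
    if "k + 2 \<le> d" "k' < d" "q \<in> P" "prefix (sib r k') q" for k k' q
    using Bas_descendant_Cmp[of k k' q] Bas_Cmp_disjoint[of k' k q] that
    by (cases "k \<le> k'") auto
  from assms(1,2) consider
      k k' where "x = Cmp (anc r k)" "k + 2 \<le> d" "y = Cmp (anc r k')" "k' + 2 \<le> d"
    | k q k' where "x = Cmp (anc r k)" "k + 2 \<le> d" "y = Bas q" "k' < d" "q \<in> P" "prefix (sib r k') q"
    | k q k' where "y = Cmp (anc r k)" "k + 2 \<le> d" "x = Bas q" "k' < d" "q \<in> P" "prefix (sib r k') q"
    | q k q' k' where "x = Bas q" "k < d" "q \<in> P" "prefix (sib r k) q"
        "y = Bas q'" "k' < d" "q' \<in> P" "prefix (sib r k') q'"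
    unfolding aug_nodes_iff by blast
  then show ?thesis
  proof cases
    case 1
    then have "k \<noteq> k'" using assms(3) by auto
    then show ?thesis using 1 Cmp_descendant_Cmp[of k k'] Cmp_descendant_Cmp[of k' k]
      by (cases "k < k'") auto
  next
    case 2
    then show ?thesis using Cmp_Bas by blast
  next
    case 3
    then show ?thesis using Cmp_Bas by blast
  next
    case 4
    then show ?thesis
      using Bas_descendant_Bas[of q q' k] Bas_descendant_Bas[of q' q k'] assms(3)
        incomparable_clusters_disjoint[of q q']
      by (auto simp: aug_cluster_def)
  qed
qed

end

section \<open>Block elimination matrices\<close>

lemma sum_idm_left: "finite M \<Longrightarrow> i \<in> M \<Longrightarrow> (\<Sum>k\<in>M. idm M i k * f k) = f i"
proof -
  have "(\<Sum>k\<in>M. idm M i k * f k) = (\<Sum>k\<in>M. if i = k then f k else 0)"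
    by (rule sum.cong) (auto simp: idm_def)
  then show "finite M \<Longrightarrow> i \<in> M \<Longrightarrow> ?thesis" by simp
qed

lemma sum_idm_right: "finite M \<Longrightarrow> j \<in> M \<Longrightarrow> (\<Sum>k\<in>M. f k * idm M k j) = f j"
  using sum_idm_left[of M j f] by (simp add: idm_def mult.commute eq_commute)

lemma is_inv_on_unique:
  assumes fin: "finite K" and Y1: "is_inv_on K X Y1" and Y2: "is_inv_on K X Y2"
  shows "Y1 = Y2"
proof (intro ext)
  fix i j
  show "Y1 i j = Y2 i j"
  proof (cases "i \<in> K \<and> j \<in> K")
    case True
    have "Y1 i j = (\<Sum>k\<in>K. Y1 i k * idm K k j)" using sum_idm_right[OF fin] True by simp
    also have "\<dots> = (\<Sum>k\<in>K. Y1 i k * (\<Sum>l\<in>K. X k l * Y2 l j))"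
      using Y2 True unfolding is_inv_on_def by (intro sum.cong) auto
    also have "\<dots> = (\<Sum>k\<in>K. \<Sum>l\<in>K. Y1 i k * X k l * Y2 l j)"
      by (simp add: sum_distrib_left mult.assoc)
    also have "\<dots> = (\<Sum>l\<in>K. \<Sum>k\<in>K. Y1 i k * X k l * Y2 l j)"
      by (rule sum.swap)
    also have "\<dots> = (\<Sum>l\<in>K. (\<Sum>k\<in>K. Y1 i k * X k l) * Y2 l j)"
      by (simp add: sum_distrib_right)
    also have "\<dots> = (\<Sum>l\<in>K. idm K i l * Y2 l j)"
      using Y1 True unfolding is_inv_on_def by (intro sum.cong) auto
    also have "\<dots> = Y2 i j" using sum_idm_left[OF fin] True by simp
    finally show ?thesis .
  qed (use Y1 Y2 in \<open>auto simp: is_inv_on_def\<close>)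
qed

lemma minv_eqI: "finite K \<Longrightarrow> is_inv_on K X Y \<Longrightarrow> minv K X = Y"
  unfolding minv_def by (rule the_equality) (auto intro: is_inv_on_unique)

lemma sum_idm_plus_square_zero:
  assumes "finite M" "i \<in> M" "j \<in> M" and square_zero: "\<And>i k j. E i k * E k j = 0"
  shows "(\<Sum>k\<in>M. (idm M i k + a * E i k) * (idm M k j + b * E k j)) = idm M i j + (a + b) * E i j"
proof -
  have "(\<Sum>k\<in>M. (idm M i k + a * E i k) * (idm M k j + b * E k j))
      = (\<Sum>k\<in>M. idm M i k * idm M k j) + b * (\<Sum>k\<in>M. idm M i k * E k j)
        + a * (\<Sum>k\<in>M. E i k * idm M k j) + a * b * (\<Sum>k\<in>M. E i k * E k j)"
    by (simp add: sum.distrib sum_distrib_left algebra_simps)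
  also have "\<dots> = idm M i j + (a + b) * E i j"
    unfolding sum_idm_left[OF assms(1,2)] sum_idm_right[OF assms(1,3)] square_zero
    by (simp add: algebra_simps)
  finally show ?thesis .
qed

lemma Lfac_nonzero: "Lfac X B S i j \<noteq> 0 \<Longrightarrow> i \<in> B \<and> j \<in> S"
  unfolding Lfac_def by (auto split: if_splits)

text \<open>Since \<open>B \<inter> S = {}\<close>, the off-diagonal block squares to zero; nothing about the pivot
  block \<open>X(S,S)\<close> is used.\<close>
lemma minv_Lmat:
  assumes fin: "finite M" and "B \<subseteq> M" "S \<subseteq> M" and disj: "B \<inter> S = {}"
  shows "minv M (Lmat M X B S) = (\<lambda>i j. idm M i j - Lfac X B S i j)"
proof (rule minv_eqI[OF fin])
  let ?E = "Lfac X B S"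
  have square_zero: "?E i k * ?E k j = 0" for i k j
    using Lfac_nonzero[of X B S i k] Lfac_nonzero[of X B S k j] disj by auto
  have Lmat: "Lmat M X B S = (\<lambda>i j. idm M i j + ?E i j)"
    using disj Lfac_nonzero[of X B S] by (intro ext) (auto simp: Lmat_def idm_def)
  have right: "(\<Sum>k\<in>M. (idm M i k + ?E i k) * (idm M k j - ?E k j)) = idm M i j"
    and left: "(\<Sum>k\<in>M. (idm M i k - ?E i k) * (idm M k j + ?E k j)) = idm M i j"
    if "i \<in> M" "j \<in> M" for i j
    using sum_idm_plus_square_zero[OF fin that square_zero, where a = 1 and b = "-1"]
      sum_idm_plus_square_zero[OF fin that square_zero, where a = "-1" and b = 1]
    by simp_all
  have outside: "idm M i j - ?E i j = 0" if "i \<notin> M \<or> j \<notin> M" for i j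
    using that Lfac_nonzero[of X B S i j] assms(2,3) by (auto simp: idm_def)
  show "is_inv_on M (Lmat M X B S) (\<lambda>i j. idm M i j - ?E i j)"
    unfolding is_inv_on_def Lmat using left right outside by blast
qed

lemma mmul_idm_minus_left:
  assumes "finite M" "S \<subseteq> M" "\<And>a b. b \<notin> S \<Longrightarrow> E a b = 0" "i \<in> M"
  shows "mmul M (\<lambda>a b. idm M a b - E a b) X i j = X i j - (\<Sum>k\<in>S. E i k * X k j)"
proof -
  have "(\<Sum>k\<in>M. E i k * X k j) = (\<Sum>k\<in>S. E i k * X k j)"
    by (rule sum.mono_neutral_right) (use assms in auto)
  then show ?thesis
    using sum_idm_left[OF assms(1,4)] by (simp add: mmul_def left_diff_distrib sum_subtractf)
qed

lemma mmul_dag_idm_minus_right: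
  assumes "finite M" "S \<subseteq> M" "\<And>a b. b \<notin> S \<Longrightarrow> E a b = 0" "j \<in> M"
  shows "mmul M Y (dag (\<lambda>a b. idm M a b - E a b)) i j = Y i j - (\<Sum>l\<in>S. Y i l * cnj (E j l))"
proof -
  have "(\<Sum>l\<in>M. Y i l * cnj (E j l)) = (\<Sum>l\<in>S. Y i l * cnj (E j l))"
    by (rule sum.mono_neutral_right) (use assms in auto)
  moreover have "cnj (idm M j l) = idm M l j" for l by (auto simp: idm_def)
  ultimately show ?thesis
    using sum_idm_right[OF assms(1,4)] by (simp add: mmul_def dag_def right_diff_distrib sum_subtractf)
qed

lemma sandwich_idm_minus:
  assumes "finite M" "S \<subseteq> M" "\<And>a b. b \<notin> S \<Longrightarrow> E a b = 0" "i \<in> M" "j \<in> M"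
  shows "mmul M (mmul M (\<lambda>a b. idm M a b - E a b) X) (dag (\<lambda>a b. idm M a b - E a b)) i j =
     X i j - (\<Sum>k\<in>S. E i k * X k j) - (\<Sum>k\<in>S. X i k * cnj (E j k))
       + (\<Sum>k\<in>S. \<Sum>l\<in>S. E i k * X k l * cnj (E j l))"
proof -
  let ?Y = "mmul M (\<lambda>a b. idm M a b - E a b) X"
  have "mmul M ?Y (dag (\<lambda>a b. idm M a b - E a b)) i j = ?Y i j - (\<Sum>l\<in>S. ?Y i l * cnj (E j l))"
    by (rule mmul_dag_idm_minus_right[OF assms(1-3,5)])
  also have "\<dots> = X i j - (\<Sum>k\<in>S. E i k * X k j)
      - (\<Sum>l\<in>S. (X i l - (\<Sum>k\<in>S. E i k * X k l)) * cnj (E j l))"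
    by (simp add: mmul_idm_minus_left[OF assms(1-4)])
  also have "(\<Sum>l\<in>S. (X i l - (\<Sum>k\<in>S. E i k * X k l)) * cnj (E j l))
      = (\<Sum>l\<in>S. X i l * cnj (E j l)) - (\<Sum>l\<in>S. \<Sum>k\<in>S. E i k * X k l * cnj (E j l))"
    by (simp add: left_diff_distrib sum_subtractf sum_distrib_right)
  also have "(\<Sum>l\<in>S. \<Sum>k\<in>S. E i k * X k l * cnj (E j l)) = (\<Sum>k\<in>S. \<Sum>l\<in>S. E i k * X k l * cnj (E j l))"
    by (rule sum.swap)
  finally show ?thesis by simp
qed

lemma sandwich_correction_vanishes:
  assumes "(\<forall>k\<in>S. E a k = 0 \<and> X a k = 0) \<or> (\<forall>k\<in>S. E b k = 0 \<and> X k b = 0)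
           \<or> (\<forall>k\<in>S. E a k = 0 \<and> E b k = 0)"
  shows "X a b - (\<Sum>k\<in>S. E a k * X k b) - (\<Sum>k\<in>S. X a k * cnj (E b k))
       + (\<Sum>k\<in>S. \<Sum>l\<in>S. E a k * X k l * cnj (E b l)) = X a b"
  using assms by auto

lemma inner_mono: "X \<subseteq> Y \<Longrightarrow> inner M A X \<subseteq> inner M A Y"
  unfolding inner_def bnd_def by blast

lemma bnd_inter_subset: "X \<subseteq> Y \<Longrightarrow> bnd M A Y \<inter> X \<subseteq> bnd M A X"
  unfolding bnd_def by blast

lemma elim_state_0: "elim_state M A Sig P Cl r ord 0 = (A, Sig)"
  unfolding elim_state_def by simp

lemma elim_state_Suc:
  "t < length ord \<Longrightarrow> elim_state M A Sig P Cl r ord (Suc t) =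
     elim_step M (Bnd M A Cl (ord ! t)) (priv M A P Cl r (ord ! t)) (elim_state M A Sig P Cl r ord t)"
  unfolding elim_state_def by (simp add: take_Suc_conv_app_nth)

section \<open>The FIND elimination\<close>

locale find_elimination = cluster_tree_leaf M P Cl r
  for M :: "'a set" and P Cl r +
  fixes A Sig :: "'a cmat" and ord :: "anode list"
  assumes ordering: "consistent_ordering P r ord" and finite_M: "finite M"
    and A_sym: "\<forall>i\<in>M. \<forall>j\<in>M. A i j \<noteq> 0 \<longleftrightarrow> A j i \<noteq> 0"
    and Sig_sparse: "\<forall>i\<in>M. \<forall>j\<in>M. i \<noteq> j \<and> A i j = 0 \<longrightarrow> Sig i j = 0"
begin

abbreviation "Bn x \<equiv> Bnd M A Cl x"
abbreviation "In x \<equiv> Inn M A Cl x"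
abbreviation "Sp x \<equiv> priv M A P Cl r x"
abbreviation "n \<equiv> length ord"
abbreviation "Sle t \<equiv> S_le M A P Cl r ord t"
abbreviation "Sgt t \<equiv> S_gt M A P Cl r ord t"
abbreviation "es t \<equiv> elim_state M A Sig P Cl r ord t"
abbreviation "Sg t \<equiv> snd (es t)"
abbreviation "Lg t \<equiv> Lfac (fst (es t)) (Bn (ord ! t)) (Sp (ord ! t))"

lemma ord_node: "s < n \<Longrightarrow> ord ! s \<in> N"
  using ordering nth_mem unfolding consistent_ordering_def by blast

lemma node_in_ord: "x \<in> N \<Longrightarrow> \<exists>s<n. ord ! s = x"
  using ordering unfolding consistent_ordering_def by (metis in_set_conv_nth)

lemma ord_descendant_before: "s < n \<Longrightarrow> t < n \<Longrightarrow> (ord ! s, ord ! t) \<in> R\<^sup>+ \<Longrightarrow> s < t"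
  using ordering unfolding consistent_ordering_def by blast

lemma ord_nth_inj: "s < n \<Longrightarrow> t < n \<Longrightarrow> s \<noteq> t \<Longrightarrow> ord ! s \<noteq> ord ! t"
  using ordering unfolding consistent_ordering_def by (simp add: nth_eq_iff_index_eq)

lemma Inn_eq: "In x = C x - Bn x"
  unfolding Inn_def Bnd_def inner_def ..

lemma Bnd_subset_cluster: "Bn x \<subseteq> C x"
  unfolding Bnd_def bnd_def by blast

lemma priv_subset_Inn: "Sp x \<subseteq> In x"
  unfolding priv_def by (auto split: option.splits)

lemma priv_subset_cluster: "Sp x \<subseteq> C x"
  using priv_subset_Inn Inn_eq by blast

lemma Bnd_priv_disjoint: "Bn x \<inter> Sp x = {}"
  using priv_subset_Inn Inn_eq by blast

lemma priv_subset_M: "x \<in> N \<Longrightarrow> Sp x \<subseteq> M"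
  using priv_subset_cluster aug_cluster_subset by blast

lemma Bnd_subset_M: "x \<in> N \<Longrightarrow> Bn x \<subseteq> M"
  using Bnd_subset_cluster aug_cluster_subset by blast

lemma priv_disjoint_descendant:
  assumes "(x, y) \<in> R\<^sup>+"
  shows "Sp x \<inter> Sp y = {}"
proof -
  obtain c where c: "(c, y) \<in> R" "x = c \<or> (x, c) \<in> R\<^sup>+"
    using assms by (rule tranclE) auto
  obtain c1 c2 where ch: "aug_children P r y = Some (c1, c2)" "c = c1 \<or> c = c2"
    using c(1) unfolding aug_child_rel_iff by blast
  have "In x \<subseteq> In c"
    using c(2) aug_descendant_cluster_subset[of x c] inner_mono unfolding Inn_def by blast
  moreover have "Sp y = In y - (In c1 \<union> In c2)"
    using ch(1) unfolding priv_def by simp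
  ultimately show ?thesis using priv_subset_Inn[of x] ch(2) by blast
qed

lemma priv_disjoint: "x \<in> N \<Longrightarrow> y \<in> N \<Longrightarrow> x \<noteq> y \<Longrightarrow> Sp x \<inter> Sp y = {}"
  using aug_tree_laminar[of x y] priv_disjoint_descendant[of x y] priv_disjoint_descendant[of y x]
    priv_subset_cluster[of x] priv_subset_cluster[of y]
  by blast

lemma priv_disjoint_leaf_side: "x \<in> N \<Longrightarrow> Sp x \<inter> (bnd M A (M - Cl r) \<union> Cl r) = {}"
proof -
  assume "x \<in> N"
  then have "In x \<subseteq> inner M A (M - Cl r)"
    unfolding Inn_def using inner_mono aug_cluster_subset by blast
  then show ?thesis using priv_subset_Inn[of x] unfolding inner_def by blast
qed

lemma S_le_iff: "y \<in> Sle t \<longleftrightarrow> (\<exists>s. s \<le> t \<and> s < n \<and> y \<in> Sp (ord ! s))"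
  unfolding S_le_def by blast

lemma S_gt_iff:
  "y \<in> Sgt t \<longleftrightarrow> (\<exists>s. t < s \<and> s < n \<and> y \<in> Sp (ord ! s)) \<or> y \<in> bnd M A (M - Cl r) \<or> y \<in> Cl r"
  unfolding S_gt_def by blast

lemma S_le_mono: "s \<le> t \<Longrightarrow> Sle s \<subseteq> Sle t"
  unfolding S_le_def by (rule UN_mono) auto

lemma S_gt_antimono: "t \<le> s \<Longrightarrow> Sgt s \<subseteq> Sgt t"
  unfolding S_gt_def by (intro Un_mono UN_mono) auto

lemma priv_subset_S_gt: "t < s \<Longrightarrow> s < n \<Longrightarrow> Sp (ord ! s) \<subseteq> Sgt t"
  unfolding S_gt_def by auto

lemma S_le_subset_M: "Sle t \<subseteq> M"
  using priv_subset_M ord_node unfolding S_le_def by blast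

lemma S_gt_subset_M: "Sgt t \<subseteq> M"
  using priv_subset_M ord_node cluster_subset[OF leaf_in] unfolding S_gt_def bnd_def by blast

lemma S_le_S_gt_disjoint: "Sle t \<inter> Sgt t = {}"
proof -
  have False if y: "y \<in> Sle t" "y \<in> Sgt t" for y
  proof -
    obtain s where s: "s \<le> t" "s < n" "y \<in> Sp (ord ! s)"
      using y(1) unfolding S_le_iff by blast
    from y(2) consider s' where "t < s'" "s' < n" "y \<in> Sp (ord ! s')"
      | "y \<in> bnd M A (M - Cl r) \<union> Cl r"
      unfolding S_gt_iff by blast
    then show False
    proof cases
      case 1
      then have "ord ! s \<noteq> ord ! s'" using ord_nth_inj[of s s'] s by auto
      then show False using priv_disjoint[OF ord_node[OF s(2)] ord_node[OF 1(2)]] s(3) 1(3) by blast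
    next
      case 2
      then show False using priv_disjoint_leaf_side[OF ord_node[OF s(2)]] s by blast
    qed
  qed
  then show ?thesis by blast
qed

lemma Inn_subset_S_le: "t < n \<Longrightarrow> In (ord ! t) \<subseteq> Sle t"
proof (induction t rule: less_induct)
  case (less t)
  have own: "Sp (ord ! t) \<subseteq> Sle t"
    using less.prems unfolding S_le_def by blast
  show ?case
  proof (cases "aug_children P r (ord ! t)")
    case None
    then have "Sp (ord ! t) = In (ord ! t)" unfolding priv_def by simp
    then show ?thesis using own by simp
  next
    case (Some cc)
    obtain c1 c2 where cc: "aug_children P r (ord ! t) = Some (c1, c2)"
      using Some by (cases cc) auto
    have child: "In c \<subseteq> Sle t" if "c = c1 \<or> c = c2" for c
    proof -
      have "c \<in> N" using aug_children_in[OF ord_node[OF less.prems] cc] that by blast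
      then obtain s where s: "s < n" "ord ! s = c" using node_in_ord by blast
      have "(c, ord ! t) \<in> R"
        using ord_node[OF less.prems] cc that unfolding aug_child_rel_iff by blast
      then have "s < t" using ord_descendant_before[OF s(1) less.prems] s by auto
      then show ?thesis using less.IH[OF \<open>s < t\<close> s(1)] s S_le_mono[of s t] by auto
    qed
    have "Sp (ord ! t) = In (ord ! t) - (In c1 \<union> In c2)"
      using cc unfolding priv_def by simp
    then show ?thesis using own child by blast
  qed
qed

lemma cluster_inter_S_gt_subset_Bnd: "s < n \<Longrightarrow> C (ord ! s) \<inter> Sgt s \<subseteq> Bn (ord ! s)"
  using Inn_subset_S_le[of s] S_le_S_gt_disjoint[of s] Inn_eq[of "ord ! s"] by blast

text \<open>By laminarity \<open>C(g\<^sub>t) \<subseteq> C(g\<^sub>s)\<close>, and \<open>C(g\<^sub>s)\<close> meets \<open>S\<^sub>>\<^sub>s\<close> only in its boundary.\<close>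
lemma Bnd_earlier_inter_S_gt:
  assumes ts: "t < s" "s < n" and i: "i \<in> Sp (ord ! s)" "i \<in> Bn (ord ! t)"
    and j: "j \<in> Bn (ord ! t)" "j \<in> Sgt s"
  shows "j \<in> Bn (ord ! s)"
proof -
  have t: "t < n" and ne: "ord ! s \<noteq> ord ! t" using ts ord_nth_inj[of s t] by auto
  from aug_tree_laminar[OF ord_node[OF ts(2)] ord_node[OF t] ne] ts
  show ?thesis
  proof (elim disjE)
    assume "(ord ! t, ord ! s) \<in> R\<^sup>+"
    then have "C (ord ! t) \<subseteq> C (ord ! s)" using aug_descendant_cluster_subset by blast
    then show ?thesis
      using j Bnd_subset_cluster[of "ord ! t"] cluster_inter_S_gt_subset_Bnd[OF ts(2)] by blast
  qed (use i ts ord_descendant_before[OF ts(2) t] priv_subset_cluster[of "ord ! s"]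
      Bnd_subset_cluster[of "ord ! t"] in auto)
qed

lemma priv_earlier_Bnd_disjoint:
  assumes "s \<le> t" "t < n"
  shows "Sp (ord ! s) \<inter> Bn (ord ! t) = {}"
proof (cases "s = t")
  case False
  then have st: "s < t" "s < n" and ne: "ord ! s \<noteq> ord ! t"
    using assms ord_nth_inj[of s t] by auto
  from aug_tree_laminar[OF ord_node[OF st(2)] ord_node[OF assms(2)] ne] st
  show ?thesis
  proof (elim disjE)
    assume "(ord ! s, ord ! t) \<in> R\<^sup>+"
    then have "C (ord ! s) \<subseteq> C (ord ! t)" using aug_descendant_cluster_subset by blast
    then have "Bn (ord ! t) \<inter> C (ord ! s) \<subseteq> Bn (ord ! s)"
      unfolding Bnd_def by (rule bnd_inter_subset)
    then show ?thesis using priv_subset_cluster[of "ord ! s"] Bnd_priv_disjoint[of "ord ! s"] by blast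
  qed (use st ord_descendant_before[OF assms(2) st(2)] priv_subset_cluster[of "ord ! s"]
      Bnd_subset_cluster[of "ord ! t"] in auto)
qed (use Bnd_priv_disjoint in blast)

lemma sigma_step:
  assumes t: "t < n" and "i \<in> M" "j \<in> M"
  shows "Sg (Suc t) i j = Sg t i j - (\<Sum>k\<in>Sp (ord ! t). Lg t i k * Sg t k j)
     - (\<Sum>k\<in>Sp (ord ! t). Sg t i k * cnj (Lg t j k))
     + (\<Sum>k\<in>Sp (ord ! t). \<Sum>l\<in>Sp (ord ! t). Lg t i k * Sg t k l * cnj (Lg t j l))"
proof -
  have BM: "Bn (ord ! t) \<subseteq> M" and SM: "Sp (ord ! t) \<subseteq> M"
    using Bnd_subset_M priv_subset_M ord_node[OF t] by auto
  have inv: "minv M (Lmat M (fst (es t)) (Bn (ord ! t)) (Sp (ord ! t))) = (\<lambda>a b. idm M a b - Lg t a b)"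
    using minv_Lmat[OF finite_M BM SM Bnd_priv_disjoint] .
  have "b \<notin> Sp (ord ! t) \<Longrightarrow> Lg t a b = 0" for a b
    unfolding Lfac_def by simp
  then show ?thesis
    unfolding elim_state_Suc[OF t] elim_step_def Let_def snd_conv inv
    by (rule sandwich_idm_minus[OF finite_M SM _ assms(2,3)])
qed

lemma sigma_unchanged:
  assumes "t < n" "a \<in> M" "b \<in> M"
    and "(\<forall>k\<in>Sp (ord ! t). Lg t a k = 0 \<and> Sg t a k = 0) \<or> (\<forall>k\<in>Sp (ord ! t). Lg t b k = 0 \<and> Sg t k b = 0)
         \<or> (\<forall>k\<in>Sp (ord ! t). Lg t a k = 0 \<and> Lg t b k = 0)"
  shows "Sg (Suc t) a b = Sg t a b"
  unfolding sigma_step[OF assms(1-3)] using assms(4) by (rule sandwich_correction_vanishes)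

lemma Lg_row_zero: "a \<notin> Bn (ord ! t) \<Longrightarrow> Lg t a k = 0"
  using Lfac_nonzero[of "fst (es t)" "Bn (ord ! t)" "Sp (ord ! t)" a k] by blast

lemma sigma_unchanged_off_Bnd:
  assumes "t < n" "a \<in> M" "b \<in> M" "a \<notin> Bn (ord ! t)" "b \<notin> Bn (ord ! t)"
  shows "Sg (Suc t) a b = Sg t a b"
  using assms by (intro sigma_unchanged) (simp_all add: Lg_row_zero)

definition decoupled :: "'a cmat \<Rightarrow> nat \<Rightarrow> bool" where
  "decoupled X s \<longleftrightarrow> (\<forall>i\<in>Sp (ord ! s). \<forall>j\<in>Sgt s - Bn (ord ! s). X i j = 0 \<and> X j i = 0)"

lemma sigma_unchanged_decoupled:
  assumes "t < n" "a \<in> M" "b \<in> M" and dec: "decoupled (Sg t) t"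
    and ab: "a \<in> Sgt t - Bn (ord ! t) \<or> b \<in> Sgt t - Bn (ord ! t)"
  shows "Sg (Suc t) a b = Sg t a b"
proof (rule sigma_unchanged[OF assms(1-3)])
  have "\<forall>k\<in>Sp (ord ! t). Lg t x k = 0 \<and> Sg t x k = 0 \<and> Sg t k x = 0"
    if "x \<in> Sgt t - Bn (ord ! t)" for x
    using dec that Lg_row_zero[of x t] unfolding decoupled_def by blast
  then show "(\<forall>k\<in>Sp (ord ! t). Lg t a k = 0 \<and> Sg t a k = 0) \<or> (\<forall>k\<in>Sp (ord ! t). Lg t b k = 0 \<and> Sg t k b = 0)
         \<or> (\<forall>k\<in>Sp (ord ! t). Lg t a k = 0 \<and> Lg t b k = 0)"
    using ab by blast
qed

text \<open>\<open>S\<^sub>s\<close> consists of inner nodes of \<open>C(g\<^sub>s)\<close> while \<open>S\<^sub>>\<^sub>s - B\<^sub>s\<close> lies outside \<open>C(g\<^sub>s)\<close>,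
  so \<open>A\<close>, and with it \<open>\<Sigma>\<close>, vanishes on these blocks.\<close>
lemma decoupled_initial: "s < n \<Longrightarrow> decoupled Sig s"
  unfolding decoupled_def
proof (intro ballI)
  fix i j assume s: "s < n" and i: "i \<in> Sp (ord ! s)" and j: "j \<in> Sgt s - Bn (ord ! s)"
  have iM: "i \<in> M" and jM: "j \<in> M"
    using priv_subset_M[OF ord_node[OF s]] S_gt_subset_M i j by blast+
  have "j \<notin> C (ord ! s)" using cluster_inter_S_gt_subset_Bnd[OF s] j by blast
  moreover have "i \<in> inner M A (C (ord ! s))" using priv_subset_Inn i unfolding Inn_def by blast
  ultimately have "A i j = 0" "i \<noteq> j" using jM unfolding inner_def bnd_def by blast+
  then show "Sig i j = 0 \<and> Sig j i = 0" using A_sym Sig_sparse iM jM by metis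
qed

lemma sigma_decoupled: "t \<le> s \<Longrightarrow> s < n \<Longrightarrow> decoupled (Sg t) s"
proof (induction t arbitrary: s)
  case 0
  then show ?case using decoupled_initial by (simp add: elim_state_0)
next
  case (Suc t)
  have t: "t < n" using Suc.prems by simp
  have dec_s: "decoupled (Sg t) s" and dec_t: "decoupled (Sg t) t"
    using Suc by auto
  show ?case
    unfolding decoupled_def
  proof (intro ballI)
    fix i j assume i: "i \<in> Sp (ord ! s)" and j: "j \<in> Sgt s - Bn (ord ! s)"
    have iM: "i \<in> M" and jM: "j \<in> M"
      using priv_subset_M[OF ord_node[OF Suc.prems(2)]] S_gt_subset_M i j by blast+
    have "i \<in> Sgt t" "j \<in> Sgt t"
      using priv_subset_S_gt[of t s] S_gt_antimono[of t s] Suc.prems i j by auto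
    moreover have "i \<notin> Bn (ord ! t) \<or> j \<notin> Bn (ord ! t)"
      using Bnd_earlier_inter_S_gt[of t s i j] Suc.prems i j by auto
    ultimately have "i \<in> Sgt t - Bn (ord ! t) \<or> j \<in> Sgt t - Bn (ord ! t)" by blast
    then show "Sg (Suc t) i j = 0 \<and> Sg (Suc t) j i = 0"
      using sigma_unchanged_decoupled[OF t iM jM dec_t] sigma_unchanged_decoupled[OF t jM iM dec_t]
        dec_s i j unfolding decoupled_def by auto
  qed
qed

lemma sigma_unchanged_on_S_le:
  assumes "t < n" "i \<in> Sle t" "j \<in> Sle t"
  shows "Sg (Suc t) i j = Sg t i j"
proof -
  have "x \<notin> Bn (ord ! t)" if "x \<in> Sle t" for x
    using that priv_earlier_Bnd_disjoint[of _ t] assms(1) unfolding S_le_iff by blast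
  then show ?thesis using sigma_unchanged_off_Bnd assms S_le_subset_M by blast
qed

lemma sigma_unchanged_off_S_gt_Bnd:
  assumes "t < n" "i \<in> M" "j \<in> Sgt t - Bn (ord ! t)"
  shows "Sg (Suc t) i j = Sg t i j \<and> Sg (Suc t) j i = Sg t j i"
  using sigma_unchanged_decoupled[OF assms(1)] sigma_decoupled[of t t] assms S_gt_subset_M by blast

end

theorem theorem3:
  fixes M :: "'a set" and A Sig :: "'a cmat"
    and P :: "bool list set" and Cl :: "bool list \<Rightarrow> 'a set"
    and r :: "bool list" and ord :: "anode list"
  assumes finM: "finite M"
    and Ainv: "invertible_on M A"
    and Asym: "\<forall>i\<in>M. \<forall>j\<in>M. A i j \<noteq> 0 \<longleftrightarrow> A j i \<noteq> 0"
    and Sig_sparse: "\<forall>i\<in>M. \<forall>j\<in>M. i \<noteq> j \<and> A i j = 0 \<longrightarrow> Sig i j = 0"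
    and tree: "cluster_tree M P Cl"
    and leaf: "is_leaf P r"
    and ordering: "consistent_ordering P r ord"
    and piv: "\<forall>t < length ord. invertible_on (priv M A P Cl r (ord ! t))
                                  (fst (elim_state M A Sig P Cl r ord t))"
  shows "\<forall>t < length ord.
     (let g = ord ! t;
          Sg = snd (elim_state M A Sig P Cl r ord t);
          Sgp = snd (elim_state M A Sig P Cl r ord (Suc t));
          Ag = fst (elim_state M A Sig P Cl r ord t);
          Bg = Bnd M A Cl g;
          Sp = priv M A P Cl r g;
          L = Lfac Ag Bg Sp
      in
        \<comment> \<open>(I)\<close>
        (\<forall>s. t \<le> s \<and> s < length ord \<longrightarrow>
           (\<forall>i\<in>priv M A P Cl r (ord ! s). \<forall>j\<in>S_gt M A P Cl r ord s - Bnd M A Cl (ord ! s).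
               Sg i j = 0 \<and> Sg j i = 0))
        \<comment> \<open>(II a)\<close>
      \<and> (\<forall>i\<in>S_le M A P Cl r ord t. \<forall>j\<in>S_le M A P Cl r ord t. Sgp i j = Sg i j)
        \<comment> \<open>(II b), (II c)\<close>
      \<and> (\<forall>i\<in>M. \<forall>j\<in>S_gt M A P Cl r ord t - Bg. Sgp i j = Sg i j \<and> Sgp j i = Sg j i)
        \<comment> \<open>(III)\<close>
      \<and> (\<forall>i\<in>Bg. \<forall>j\<in>Bg.
           Sgp i j = Sg i j - (\<Sum>k\<in>Sp. L i k * Sg k j) - (\<Sum>k\<in>Sp. Sg i k * cnj (L j k))
                     + (\<Sum>k\<in>Sp. \<Sum>l\<in>Sp. L i k * Sg k l * cnj (L j l))))"
proof -
  interpret find_elimination M P Cl r A Sig ord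
    using tree leaf ordering finM Asym Sig_sparse
    by (simp add: find_elimination_def find_elimination_axioms_def cluster_tree_leaf_def
        cluster_tree_leaf_axioms_def binary_cluster_tree_def)
  show ?thesis
    unfolding Let_def
  proof (rule allI, rule impI, intro conjI)
    fix t assume t: "t < n"
    show "\<forall>s. t \<le> s \<and> s < n \<longrightarrow>
        (\<forall>i\<in>Sp (ord ! s). \<forall>j\<in>Sgt s - Bn (ord ! s). Sg t i j = 0 \<and> Sg t j i = 0)"
      using sigma_decoupled[of t] unfolding decoupled_def by blast
    show "\<forall>i\<in>Sle t. \<forall>j\<in>Sle t. Sg (Suc t) i j = Sg t i j"
      using sigma_unchanged_on_S_le[OF t] by blast
    show "\<forall>i\<in>M. \<forall>j\<in>Sgt t - Bn (ord ! t). Sg (Suc t) i j = Sg t i j \<and> Sg (Suc t) j i = Sg t j i"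
      using sigma_unchanged_off_S_gt_Bnd[OF t] by blast
    show "\<forall>i\<in>Bn (ord ! t). \<forall>j\<in>Bn (ord ! t).
        Sg (Suc t) i j = Sg t i j - (\<Sum>k\<in>Sp (ord ! t). Lg t i k * Sg t k j)
          - (\<Sum>k\<in>Sp (ord ! t). Sg t i k * cnj (Lg t j k))
          + (\<Sum>k\<in>Sp (ord ! t). \<Sum>l\<in>Sp (ord ! t). Lg t i k * Sg t k l * cnj (Lg t j l))"
      using sigma_step[OF t] Bnd_subset_M[OF ord_node[OF t]] by blast
  qed
qed

end
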